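(* For real $\theta$ such that no lower parameter below is a nonpositive integer, near $x=0$, $${}_3F_2\!\left[\begin{matrix}-\tfrac16+\tfrac{\sqrt3}3\sin\theta,\ \tfrac16+\tfrac{\sqrt3}3\sin\theta,\ \tfrac12+\tfrac{\sqrt3}3\sin\theta\\ 1+\sin(\theta+\tfrac\pi6),\ 1+\sin(\theta-\tfrac\pi6)\end{matrix}\,\Big|\,-\frac{27x}{(1-4x)^3}\right]$$ $$=(1-4x)^{-\frac12+\sqrt3\sin\theta}\;{}_4F_3\!\left[\begin{matrix}-\tfrac12+\sqrt3\sin\theta,\ -\tfrac12-\cos\theta,\ -\tfrac12+\cos\theta,\ \tfrac32+\tfrac{\sqrt3}3\sin\theta\\ 1+\sin(\theta+\tfrac\pi6),\ 1+\sin(\theta-\tfrac\pi6),\ -\tfrac12+\tfrac{\sqrt3}3\sin\theta\end{matrix}\,\Big|\,x\right].$$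
   Context: ${}_pF_q$ denotes the generalized hypergeometric series $\sum_n\frac{\prod(a_i)_n}{n!\prod(b_i)_n}x^n$, with $(c)_n$ the Pochhammer symbol. *)

theory Defs
  imports Complex_Main
begin

definition hypergeom :: "real list \<Rightarrow> real list \<Rightarrow> real \<Rightarrow> real" where
  "hypergeom as bs x =
     (\<Sum>n. prod_list (map (\<lambda>a. pochhammer a n) as)
            / (fact n * prod_list (map (\<lambda>b. pochhammer b n) bs)) * x ^ n)"

definition nonpos_int :: "real \<Rightarrow> bool" where
  "nonpos_int b \<longleftrightarrow> (\<exists>k::nat. b = - real k)"

end

theory Submission
  imports Defs "HOL-Complex_Analysis.Laurent_Convergence"
begin

text \<open>
  The left-hand series F is annihilated by the hypergeometric operator
  \<theta>(\<theta> + b1 - 1)(\<theta> + b2 - 1) - z(\<theta> + a1)(\<theta> + a2)(\<theta> + a3), where \<theta> = z d/dz.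
  Under the substitution z = -27x/(1-4x)^3 the operator \<theta> becomes (1-4x)/(1+8x) times the Euler
  operator in x, so F(z(x)) is annihilated by a transported operator L with rational coefficients.
  Conjugating L by E = (1-4x)^(3u-1/2) and clearing the factor (1+8x)^3 leaves an operator whose
  coefficients are polynomials of degree three in x; it kills the right-hand series G because the
  resulting four-term recurrence for the coefficients of G is a combination of the two-term
  recurrence of an auxiliary 3F2. Hence E G is annihilated by L as well. The indicial polynomial of L
  has no positive integer roots, so a power series annihilated by L is determined by its constant
  term, and F(z(x)) = E(x) G(x) as formal power series. Positive radii of convergence turn this
  into the stated identity of functions near 0.
\<close>

definition hypergeom_coeff :: "real list \<Rightarrow> real list \<Rightarrow> nat \<Rightarrow> real" where
  "hypergeom_coeff as bs n =
     prod_list (map (\<lambda>a. pochhammer a n) as) / (fact n * prod_list (map (\<lambda>b. pochhammer b n) bs))"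

lemma hypergeom_eq_suminf: "hypergeom as bs x = (\<Sum>n. hypergeom_coeff as bs n * x ^ n)"
  by (simp add: hypergeom_def hypergeom_coeff_def)

lemma hypergeom_coeff_0 [simp]: "hypergeom_coeff as bs 0 = 1"
  by (induction as; induction bs) (simp_all add: hypergeom_coeff_def)

lemma pochhammer_neq_0_if_not_nonpos_int: "\<not> nonpos_int b \<Longrightarrow> pochhammer b n \<noteq> 0"
  by (auto simp: pochhammer_eq_0_iff nonpos_int_def)

lemma add_of_nat_neq_0_if_not_nonpos_int: "\<not> nonpos_int b \<Longrightarrow> b + real n \<noteq> 0"
  unfolding nonpos_int_def by (metis add.commute add_eq_0_iff2 minus_equation_iff)

lemma prod_list_map_mult:
  "prod_list (map (\<lambda>a. f a * g a) xs) = prod_list (map f xs) * (prod_list (map g xs) :: 'a::comm_monoid_mult)"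
  by (induction xs) (simp_all add: mult_ac)

lemma hypergeom_coeff_Suc:
  assumes "\<forall>b\<in>set bs. \<not> nonpos_int b"
  shows "hypergeom_coeff as bs (Suc n) * prod_list (map (\<lambda>b. b + real n) (1 # bs))
         = hypergeom_coeff as bs n * prod_list (map (\<lambda>a. a + real n) as)"
proof -
  define P :: "real list \<Rightarrow> real" where "P xs = prod_list (map (\<lambda>a. pochhammer a n) xs)" for xs
  define Q :: "real list \<Rightarrow> real" where "Q xs = prod_list (map (\<lambda>a. a + real n) xs)" for xs
  have "P bs \<noteq> 0" "Q bs \<noteq> 0"
    using assms pochhammer_neq_0_if_not_nonpos_int add_of_nat_neq_0_if_not_nonpos_int
    by (auto simp: prod_list_zero_iff P_def Q_def)
  moreover have "prod_list (map (\<lambda>a. pochhammer a (Suc n)) xs) = P xs * Q xs" for xs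
    by (simp add: pochhammer_Suc prod_list_map_mult P_def Q_def)
  ultimately have "hypergeom_coeff as bs (Suc n) * ((1 + real n) * Q bs) = P as * Q as / (fact n * P bs)"
    unfolding hypergeom_coeff_def by (simp add: fact_Suc)
  thus ?thesis by (simp add: hypergeom_coeff_def P_def Q_def)
qed

section \<open>Radius of convergence\<close>

lemma fps_conv_radius_pos_if_ratio_bounded:
  fixes f D N :: "nat \<Rightarrow> real"
  assumes rec: "\<And>n. f (Suc n) * D n = f n * N n" and D: "\<And>n. D n \<noteq> 0" and "K > 0"
      and bound: "eventually (\<lambda>n. \<bar>N n\<bar> \<le> K * \<bar>D n\<bar>) sequentially"
  shows "fps_conv_radius (Abs_fps (\<lambda>n. complex_of_real (f n))) > 0"
proof -
  have "eventually (\<lambda>n. \<bar>f (Suc n)\<bar> \<le> K * \<bar>f n\<bar>) sequentially"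
    using bound
  proof eventually_elim
    case (elim n)
    have "\<bar>f (Suc n)\<bar> * \<bar>D n\<bar> = \<bar>f n\<bar> * \<bar>N n\<bar>" using rec[of n] by (metis abs_mult)
    also have "\<dots> \<le> \<bar>f n\<bar> * (K * \<bar>D n\<bar>)" using elim by (intro mult_left_mono) auto
    finally have "\<bar>f (Suc n)\<bar> * \<bar>D n\<bar> \<le> (K * \<bar>f n\<bar>) * \<bar>D n\<bar>" by (simp add: algebra_simps)
    thus ?case using D[of n] by simp
  qed
  then obtain M where M: "\<And>n. n \<ge> M \<Longrightarrow> \<bar>f (Suc n)\<bar> \<le> K * \<bar>f n\<bar>"
    unfolding eventually_sequentially by blast
  define r where "r = 1 / (2 * K)"
  have r: "r > 0" "K * r = 1/2" using \<open>K > 0\<close> by (auto simp: r_def)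
  have "summable (\<lambda>n. complex_of_real (f n) * complex_of_real r ^ n)"
  proof (rule summable_ratio_test[of "1/2" M])
    fix n assume "n \<ge> M"
    have "\<bar>f (Suc n)\<bar> * r ^ Suc n \<le> (K * \<bar>f n\<bar>) * r ^ Suc n"
      using M[OF \<open>n \<ge> M\<close>] r by (intro mult_right_mono) auto
    also have "\<dots> = (K * r) * (\<bar>f n\<bar> * r ^ n)" by (simp add: algebra_simps)
    finally show "norm (complex_of_real (f (Suc n)) * complex_of_real r ^ Suc n)
        \<le> 1/2 * norm (complex_of_real (f n) * complex_of_real r ^ n)"
      using r by (simp add: norm_mult norm_power)
  qed simp
  hence "conv_radius (\<lambda>n. complex_of_real (f n)) \<ge> ereal r"
    using conv_radius_geI r by fastforce
  thus ?thesis using r unfolding fps_conv_radius_def by (simp add: less_le_trans[of 0 "ereal r"])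
qed

lemma eventually_abs_shift_le: "eventually (\<lambda>n. \<bar>a + real n\<bar> \<le> 2 * \<bar>b + real n\<bar>) sequentially"
proof -
  obtain M :: nat where M: "real M \<ge> \<bar>a\<bar> + 2 * \<bar>b\<bar>" by (meson real_arch_simple)
  have "\<bar>a + real n\<bar> \<le> 2 * \<bar>b + real n\<bar>" if "n \<ge> M" for n
  proof -
    have "real n \<ge> \<bar>a\<bar> + 2 * \<bar>b\<bar>" using M that by linarith
    thus ?thesis by (cases "b \<ge> 0"; cases "a \<ge> 0") (auto simp: abs_if)
  qed
  thus ?thesis unfolding eventually_sequentially by blast
qed

lemma eventually_abs_prod_shift_le:
  assumes "length as = length bs"
  shows "eventually (\<lambda>n. \<bar>prod_list (map (\<lambda>a. a + real n) as)\<bar>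
                        \<le> 2 ^ length as * \<bar>prod_list (map (\<lambda>b. b + real n) bs)\<bar>) sequentially"
  using assms
proof (induction as bs rule: list_induct2)
  case (Cons a as b bs)
  from eventually_conj[OF eventually_abs_shift_le[of a b] Cons.IH] show ?case
  proof eventually_elim
    case (elim n)
    have "\<bar>a + real n\<bar> * \<bar>prod_list (map (\<lambda>a. a + real n) as)\<bar>
        \<le> (2 * \<bar>b + real n\<bar>) * (2 ^ length as * \<bar>prod_list (map (\<lambda>b. b + real n) bs)\<bar>)"
      using elim by (intro mult_mono) auto
    thus ?case by (simp add: abs_mult mult_ac)
  qed
qed simp

lemma fps_conv_radius_hypergeom_pos:
  assumes "length as = Suc (length bs)" and "\<forall>b\<in>set bs. \<not> nonpos_int b"
  shows "fps_conv_radius (Abs_fps (\<lambda>n. complex_of_real (hypergeom_coeff as bs n))) > 0"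
proof (rule fps_conv_radius_pos_if_ratio_bounded)
  show "hypergeom_coeff as bs (Suc n) * prod_list (map (\<lambda>b. b + real n) (1 # bs))
      = hypergeom_coeff as bs n * prod_list (map (\<lambda>a. a + real n) as)" for n
    using hypergeom_coeff_Suc[OF assms(2)] .
  show "prod_list (map (\<lambda>b. b + real n) (1 # bs)) \<noteq> 0" for n
    using assms(2) add_of_nat_neq_0_if_not_nonpos_int by (auto simp: prod_list_zero_iff)
  show "eventually (\<lambda>n. \<bar>prod_list (map (\<lambda>a. a + real n) as)\<bar>
      \<le> 2 ^ length as * \<bar>prod_list (map (\<lambda>b. b + real n) (1 # bs))\<bar>) sequentially"
    using eventually_abs_prod_shift_le[of as "1 # bs"] assms(1) by simp
qed simp

lemma eval_fps_of_real:
  fixes f :: "nat \<Rightarrow> real"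
  assumes "ereal \<bar>t\<bar> < fps_conv_radius (Abs_fps (\<lambda>n. complex_of_real (f n)))"
  shows "eval_fps (Abs_fps (\<lambda>n. complex_of_real (f n))) (complex_of_real t)
       = complex_of_real (\<Sum>n. f n * t ^ n)"
proof -
  have "summable (\<lambda>n. norm (Abs_fps (\<lambda>n. complex_of_real (f n)) $ n * complex_of_real t ^ n))"
    using assms by (intro norm_summable_fps) simp
  hence "summable (\<lambda>n. norm (f n * t ^ n))" by (simp add: norm_mult norm_power abs_mult power_abs)
  hence "summable (\<lambda>n. f n * t ^ n)" by (rule summable_norm_cancel)
  hence "(\<lambda>n. complex_of_real (f n) * complex_of_real t ^ n) sums complex_of_real (\<Sum>n. f n * t ^ n)"
    using sums_of_real[OF summable_sums] by fastforce
  thus ?thesis unfolding eval_fps_def by (simp add: sums_iff)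
qed

definition gen_binomial_coeff :: "real \<Rightarrow> real \<Rightarrow> nat \<Rightarrow> real" where
  "gen_binomial_coeff a z n = (a gchoose n) * z ^ n"

lemma gen_binomial_coeff_Suc:
  "gen_binomial_coeff a z (Suc n) * (1 + real n) = gen_binomial_coeff a z n * (z * (a - real n))"
proof -
  have "real (Suc n) * (a gchoose Suc n) = (a - real n) * (a gchoose n)"
    using gbinomial_mult_1[of a n] by (simp add: algebra_simps)
  hence "z ^ Suc n * ((1 + real n) * (a gchoose Suc n)) = z ^ Suc n * ((a - real n) * (a gchoose n))"
    by simp
  thus ?thesis by (simp add: gen_binomial_coeff_def algebra_simps)
qed

lemma gen_binomial_conv_radius_pos:
  "fps_conv_radius (Abs_fps (\<lambda>n. complex_of_real (gen_binomial_coeff a z n))) > 0"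
proof (rule fps_conv_radius_pos_if_ratio_bounded)
  show "gen_binomial_coeff a z (Suc n) * (1 + real n) = gen_binomial_coeff a z n * (z * (a - real n))" for n
    by (rule gen_binomial_coeff_Suc)
  show "eventually (\<lambda>n. \<bar>z * (a - real n)\<bar> \<le> (2 * \<bar>z\<bar> + 1) * \<bar>1 + real n\<bar>) sequentially"
    using eventually_abs_shift_le[of "- a" 1]
  proof eventually_elim
    case (elim n)
    have "\<bar>z * (a - real n)\<bar> = \<bar>z\<bar> * \<bar>- a + real n\<bar>" by (simp add: abs_mult abs_minus_commute)
    also have "\<dots> \<le> \<bar>z\<bar> * (2 * \<bar>1 + real n\<bar>)" using elim by (intro mult_left_mono) auto
    also have "\<dots> \<le> (2 * \<bar>z\<bar> + 1) * \<bar>1 + real n\<bar>" by (simp add: algebra_simps)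
    finally show ?case .
  qed
qed auto

lemma gen_binomial_sums:
  assumes "\<bar>z * x\<bar> < 1"
  shows "(\<lambda>n. gen_binomial_coeff a z n * x ^ n) sums (1 + z * x) powr a"
  using gen_binomial_real[OF assms, of a] by (simp add: gen_binomial_coeff_def power_mult_distrib mult.assoc)

lemma abs_cubic_map_le:
  fixes x :: real
  assumes "\<bar>x\<bar> < 1/8"
  shows "\<bar>-27 * x / (1 - 4 * x) ^ 3\<bar> \<le> 216 * \<bar>x\<bar>"
proof -
  have "1 - 4 * x \<ge> 1/2" using assms by (simp add: abs_less_iff)
  hence "(1 - 4 * x) ^ 3 \<ge> (1/2) ^ 3" by (intro power_mono) auto
  hence "(1 - 4 * x) ^ 3 \<ge> 1/8" by (simp add: power3_eq_cube)
  hence "27 * \<bar>x\<bar> / (1 - 4 * x) ^ 3 \<le> 27 * \<bar>x\<bar> / (1/8)"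
    using \<open>1 - 4 * x \<ge> 1/2\<close> by (intro divide_left_mono) auto
  moreover have "\<bar>(1 - 4 * x) ^ 3\<bar> = (1 - 4 * x) ^ 3" using \<open>(1 - 4 * x) ^ 3 \<ge> 1/8\<close> by simp
  ultimately show ?thesis by (simp add: abs_mult abs_divide)
qed

section \<open>Derivations of a field\<close>

locale field_derivation =
  fixes \<delta> :: "'a::field_char_0 \<Rightarrow> 'a"
  assumes add [simp]: "\<delta> (a + b) = \<delta> a + \<delta> b"
      and mult [simp]: "\<delta> (a * b) = \<delta> a * b + a * \<delta> b"
begin

lemma one [simp]: "\<delta> 1 = 0"
  using mult[of 1 1] by simp

lemma zero [simp]: "\<delta> 0 = 0"
  using add[of 0 0] by simp

lemma minus [simp]: "\<delta> (- a) = - \<delta> a"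
  using add[of a "- a"] by (simp add: add_eq_0_iff)

lemma diff [simp]: "\<delta> (a - b) = \<delta> a - \<delta> b"
  using add[of a "- b"] by simp

lemma numeral [simp]: "\<delta> (numeral k) = 0"
  by (induction k) (simp_all only: numeral.simps add one add_0_right)

lemma power [simp]: "\<delta> (a ^ n) = of_nat n * a ^ (n - 1) * \<delta> a"
  by (induction n) (auto simp: algebra_simps power_eq_if)

lemma divide: "b \<noteq> 0 \<Longrightarrow> \<delta> (a / b) = (\<delta> a * b - a * \<delta> b) / b\<^sup>2"
proof -
  assume "b \<noteq> 0"
  hence "\<delta> a = \<delta> (a / b) * b + a / b * \<delta> b" using mult[of "a / b" b] by simp
  with \<open>b \<noteq> 0\<close> show ?thesis by (simp add: field_simps power2_eq_square)
qed

lemma theta_cubic_map: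
  assumes "\<delta> x = x" and "1 + 8 * x \<noteq> 0" and "1 - 4 * x \<noteq> 0"
  shows "(1 - 4 * x) / (1 + 8 * x) * \<delta> (- 27 * x / (1 - 4 * x) ^ 3) = - 27 * x / (1 - 4 * x) ^ 3"
proof -
  define q where "q = - 27 * x / (1 - 4 * x) ^ 3"
  have "q * (1 - 4 * x) ^ 3 = - 27 * x" using assms(3) by (simp add: q_def)
  hence "\<delta> (q * (1 - 4 * x) ^ 3) = - 27 * x" using assms(1) by simp
  hence "\<delta> q * (1 - 4 * x) ^ 3 - 12 * x * q * (1 - 4 * x) ^ 2 = q * (1 - 4 * x) ^ 3"
    using \<open>q * (1 - 4 * x) ^ 3 = - 27 * x\<close> assms(1) by (simp add: algebra_simps)
  hence "(1 - 4 * x) ^ 2 * (\<delta> q * (1 - 4 * x) - q * (1 + 8 * x)) = 0" by algebra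
  hence "\<delta> q * (1 - 4 * x) = q * (1 + 8 * x)" using assms(3) by simp
  thus ?thesis unfolding q_def[symmetric] using assms(2) by (simp add: field_simps)
qed

end

text \<open>
  The coefficient of x^k \<theta>^j in the operator that transformed_operator below obtains from the
  transported hypergeometric operator.
\<close>

definition cubic_opcoeff :: "'a::field \<Rightarrow> nat \<Rightarrow> nat \<Rightarrow> 'a" where
  "cubic_opcoeff u k j = (if k \<le> 3 \<and> j \<le> 3 then
     [[0, 3 * u\<^sup>2 - 1/4, 3 * u, 1],
      [9/8 - 15/4 * u - 33/2 * u\<^sup>2 - 9 * u ^ 3, - 39/4 - 33 * u + 45 * u\<^sup>2, - 33/2 + 45 * u, 15],
      [- 18 + 132 * u - 120 * u\<^sup>2 - 144 * u ^ 3, 84 - 240 * u + 144 * u\<^sup>2, - 120 + 144 * u, 48],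
      [- 24 + 144 * u + 96 * u\<^sup>2 - 576 * u ^ 3, 16 + 192 * u - 192 * u\<^sup>2, 96 - 192 * u, - 64]] ! k ! j
     else 0)"

context field_derivation
begin

context
  fixes x u e g0 g1 g2 g3 :: 'a and T :: "'a \<Rightarrow> 'a"
  assumes \<delta>_x: "\<delta> x = x" and \<delta>_u: "\<delta> u = 0"
      and \<delta>_e: "\<delta> e * (1 - 4 * x) = -4 * (3 * u - 1/2) * x * e"
      and \<delta>_g: "\<delta> g0 = g1" "\<delta> g1 = g2" "\<delta> g2 = g3"
      and nz: "1 + 8 * x \<noteq> 0" "1 - 4 * x \<noteq> 0"
      and T_def: "\<And>h. T h = (1 - 4 * x) / (1 + 8 * x) * \<delta> h"
begin

lemma T_e_frac:
  "T (e * (N / (1 + 8 * x) ^ (2 * k))) = e * (((1 - 4 * x) * ((1 + 8 * x) * \<delta> N - 16 * of_nat k * x * N)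
     - 4 * (3 * u - 1/2) * x * (1 + 8 * x) * N) / (1 + 8 * x) ^ (2 * k + 2))"
proof -
  define w where "w = 1 + 8 * x"
  define D where "D = w ^ (2 * k)"
  have w: "w \<noteq> 0" and D: "D \<noteq> 0" using nz by (simp_all add: w_def D_def)
  have "\<delta> w = 8 * x" by (simp add: w_def \<delta>_x)
  hence "\<delta> D = of_nat (2 * k) * w ^ (2 * k - 1) * (8 * x)" by (simp add: D_def)
  moreover have "w ^ (2 * k - 1) * w = D" if "k > 0"
    using that power_minus_mult[of "2 * k" w] by (simp add: D_def)
  ultimately have "\<delta> D * w = 16 * of_nat k * x * D" by (cases "k = 0") (auto simp: algebra_simps)
  hence dD: "\<delta> D = 16 * of_nat k * x * D / w" using w by (simp add: field_simps)
  have de: "\<delta> e = -4 * (3 * u - 1/2) * x * e / (1 - 4 * x)" using \<delta>_e nz by (simp add: field_simps)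
  have "T (e * (N / D)) = (1 - 4 * x) / w * (\<delta> e * (N / D) + e * ((\<delta> N * D - N * \<delta> D) / D\<^sup>2))"
    using D nz by (simp add: T_def w_def divide field_simps power2_eq_square)
  also have "\<dots> = e * (((1 - 4 * x) * (w * \<delta> N - 16 * of_nat k * x * N)
     - 4 * (3 * u - 1/2) * x * w * N) / (D * w\<^sup>2))"
    unfolding dD de using w D nz by (simp add: field_simps power2_eq_square)
  finally show ?thesis unfolding w_def D_def power_add .
qed

lemma transformed_operator:
  "(T (T (T (e * g0))) + 3 * u * T (T (e * g0)) + (3 * u\<^sup>2 - 1/4) * T (e * g0)
     - (-27 * x / (1 - 4 * x) ^ 3) * (T (T (T (e * g0))) + (3 * u + 1/2) * T (T (e * g0))
        + (3 * u\<^sup>2 + u - 1/36) * T (e * g0) + (u - 1/6) * (u + 1/6) * (u + 1/2) * (e * g0)))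
   * (1 + 8 * x) ^ 3
   = e * (\<Sum>k\<le>3. x ^ k * (cubic_opcoeff u k 0 * g0 + cubic_opcoeff u k 1 * g1
                              + cubic_opcoeff u k 2 * g2 + cubic_opcoeff u k 3 * g3))"
proof -
  define w where "w = 1 + 8 * x"
  define v where "v = 1 - 4 * x"
  have w: "w \<noteq> 0" and v: "v \<noteq> 0" using nz by (simp_all add: w_def v_def)
  txt \<open>By T_e_frac, N1, N2, N3 are the numerators (1 + 8x)^(2k) T^k(e g0) / e, k = 1, 2, 3.\<close>
  define N1 where "N1 = v * (w * \<delta> g0) - 4 * (3 * u - 1/2) * x * w * g0"
  define N2 where "N2 = v * (w * \<delta> N1 - 16 * x * N1) - 4 * (3 * u - 1/2) * x * w * N1"
  define N3 where "N3 = v * (w * \<delta> N2 - 32 * x * N2) - 4 * (3 * u - 1/2) * x * w * N2"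
  define M where "M = (\<Sum>k\<le>3. x ^ k * (cubic_opcoeff u k 0 * g0 + cubic_opcoeff u k 1 * g1
                              + cubic_opcoeff u k 2 * g2 + cubic_opcoeff u k 3 * g3))"
  define P where "P = v ^ 3 * (N3 + 3 * u * N2 * w\<^sup>2 + (3 * u\<^sup>2 - 1/4) * N1 * w ^ 4)
      + 27 * x * (N3 + (3 * u + 1/2) * N2 * w\<^sup>2 + (3 * u\<^sup>2 + u - 1/36) * N1 * w ^ 4
                 + (u - 1/6) * (u + 1/6) * (u + 1/2) * g0 * w ^ 6)"
  have T1: "T (e * g0) = e * (N1 / w ^ 2)"
    using T_e_frac[of g0 0] by (simp add: N1_def w_def v_def power2_eq_square)
  have T2: "T (T (e * g0)) = e * (N2 / w ^ 4)"
    unfolding T1 using T_e_frac[of N1 1] by (simp add: N2_def w_def v_def)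
  have T3: "T (T (T (e * g0))) = e * (N3 / w ^ 6)"
    unfolding T2 using T_e_frac[of N2 2] by (simp add: N3_def w_def v_def)
  have P: "P = M * (w ^ 3 * v ^ 3)"
    unfolding P_def N3_def N2_def N1_def M_def w_def v_def
    by (simp add: \<delta>_x \<delta>_u \<delta>_g cubic_opcoeff_def atMost_nat_numeral) algebra
  have "(T (T (T (e * g0))) + 3 * u * T (T (e * g0)) + (3 * u\<^sup>2 - 1/4) * T (e * g0)
     - (-27 * x / v ^ 3) * (T (T (T (e * g0))) + (3 * u + 1/2) * T (T (e * g0))
        + (3 * u\<^sup>2 + u - 1/36) * T (e * g0) + (u - 1/6) * (u + 1/6) * (u + 1/2) * (e * g0)))
   * w ^ 3 = e * (P / (w ^ 3 * v ^ 3))"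
    unfolding T3 unfolding T2 unfolding T1 P_def using w v by (simp add: field_simps)
  also have "\<dots> = e * M" using w v by (simp add: P)
  finally show ?thesis unfolding M_def w_def v_def .
qed
end
end

section \<open>The Euler operator and the cubic substitution\<close>

definition fps_theta :: "'a::comm_ring_1 fps \<Rightarrow> 'a fps" where
  "fps_theta A = fps_X * fps_deriv A"

lemma fps_theta_nth [simp]: "fps_theta A $ n = of_nat n * A $ n"
  by (simp add: fps_theta_def fps_mult_fps_X_deriv_shift)

lemma fps_theta_diff: "fps_theta (A - B) = fps_theta A - fps_theta B"
  by (simp add: fps_theta_def algebra_simps)

lemma fps_theta_compose:
  fixes A Z R :: "'a::idom fps"
  assumes "Z $ 0 = 0" and "R * fps_theta Z = Z"
  shows "fps_theta A oo Z = R * fps_theta (A oo Z)"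
proof -
  have "fps_theta A oo Z = Z * (fps_deriv A oo Z)"
    using assms(1) by (simp add: fps_theta_def fps_compose_mult_distrib)
  also have "\<dots> = R * fps_theta (A oo Z)"
    by (subst (1) assms(2)[symmetric]) (simp add: fps_theta_def fps_compose_deriv[OF assms(1)] ac_simps)
  finally show ?thesis .
qed

lemma gen_binomial_fps_theta:
  fixes a z :: real
  defines "E \<equiv> Abs_fps (\<lambda>n. complex_of_real (gen_binomial_coeff a z n))"
  shows "fps_theta E * (1 + fps_const (of_real z) * fps_X) = fps_const (of_real (z * a)) * fps_X * E"
proof (rule fps_ext)
  fix n
  show "(fps_theta E * (1 + fps_const (of_real z) * fps_X)) $ n = (fps_const (of_real (z * a)) * fps_X * E) $ n"
  proof (cases n)
    case (Suc m)
    have "of_real (gen_binomial_coeff a z (Suc m) * (1 + real m))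
        = (of_real (gen_binomial_coeff a z m * (z * (a - real m))) :: complex)"
      by (simp only: gen_binomial_coeff_Suc)
    thus ?thesis using Suc by (simp add: E_def algebra_simps)
  qed (simp add: E_def)
qed

definition fls_theta :: "'a::field_char_0 fls \<Rightarrow> 'a fls" where
  "fls_theta f = fls_X * fls_deriv f"

interpretation fls_theta: field_derivation fls_theta
  by unfold_locales (simp_all add: fls_theta_def algebra_simps)

lemma fls_theta_fls_X [simp]: "fls_theta fls_X = fls_X"
  by (simp add: fls_theta_def)

lemma fls_theta_fls_const [simp]: "fls_theta (fls_const a) = 0"
  by (simp add: fls_theta_def)

lemma fps_to_fls_fps_theta: "fps_to_fls (fps_theta A) = fls_theta (fps_to_fls A)"
  by (simp add: fps_theta_def fls_theta_def fls_times_fps_to_fls fls_deriv_fps_to_fls)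

definition cubic_map :: "'a::field fps" where
  "cubic_map = - 27 * fps_X * inverse ((1 - 4 * fps_X) ^ 3)"

definition cubic_scale :: "'a::field fps" where
  "cubic_scale = (1 - 4 * fps_X) * inverse (1 + 8 * fps_X)"

lemma fps_to_fls_inverse_unit:
  fixes f :: "'a::field fps"
  assumes "f $ 0 = 1"
  shows "fps_to_fls (inverse f) = inverse (fps_to_fls f)"
  using assms by (simp add: fls_inverse_fps_to_fls)

lemma fps_to_fls_cubic_map:
  "fps_to_fls (cubic_map :: 'a::field fps) = - 27 * fls_X / (1 - 4 * fls_X) ^ 3"
  by (simp add: cubic_map_def fls_times_fps_to_fls fps_to_fls_inverse_unit fps_to_fls_power
      fps_nth_power_0 divide_inverse)

lemma fps_to_fls_cubic_scale:
  "fps_to_fls (cubic_scale :: 'a::field fps) = (1 - 4 * fls_X) / (1 + 8 * fls_X)"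
  by (simp add: cubic_scale_def fls_times_fps_to_fls fps_to_fls_inverse_unit divide_inverse)

lemma cubic_map_nth_0 [simp]: "cubic_map $ 0 = 0"
  by (simp add: cubic_map_def fps_mult_nth)

lemma cubic_scale_nth_0 [simp]: "cubic_scale $ 0 = 1"
  by (simp add: cubic_scale_def)

lemma fps_to_fls_neq_0: "f $ 0 \<noteq> 0 \<Longrightarrow> fps_to_fls f \<noteq> 0"
  by (metis fps_to_fls_eq_0_iff fps_zero_nth)

lemma fls_cubic_denominators_neq_0:
  "(1 + 8 * fls_X :: 'a::field fls) \<noteq> 0" "(1 - 4 * fls_X :: 'a fls) \<noteq> 0"
  using fps_to_fls_neq_0[of "1 + 8 * fps_X :: 'a fps"] fps_to_fls_neq_0[of "1 - 4 * fps_X :: 'a fps"]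
  by (simp_all add: fls_times_fps_to_fls)

lemma cubic_scale_theta_cubic_map: "cubic_scale * fps_theta cubic_map = (cubic_map :: 'a::field_char_0 fps)"
proof -
  have "fps_to_fls (cubic_scale * fps_theta cubic_map) = fps_to_fls (cubic_map :: 'a fps)"
    unfolding fls_times_fps_to_fls fps_to_fls_fps_theta fps_to_fls_cubic_scale fps_to_fls_cubic_map
    by (rule fls_theta.theta_cubic_map[OF fls_theta_fls_X fls_cubic_denominators_neq_0])
  thus ?thesis by simp
qed

lemma fps_theta_compose_cubic_map:
  "fps_theta A oo cubic_map = cubic_scale * fps_theta (A oo cubic_map :: 'a::field_char_0 fps)"
  by (rule fps_theta_compose[OF cubic_map_nth_0 cubic_scale_theta_cubic_map])

section \<open>The hypergeometric operator\<close>

definition cubic_indicial :: "'a::field \<Rightarrow> 'a \<Rightarrow> 'a" where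
  "cubic_indicial U t = t ^ 3 + 3 * U * t\<^sup>2 + (3 * U\<^sup>2 - 1/4) * t"

definition cubic_numerator :: "'a::field \<Rightarrow> 'a \<Rightarrow> 'a" where
  "cubic_numerator U t = (U - 1/6 + t) * (U + 1/6 + t) * (U + 1/2 + t)"

text \<open>
  The operator \<theta>(\<theta> + b1 - 1)(\<theta> + b2 - 1) - Y(\<theta> + a1)(\<theta> + a2)(\<theta> + a3) for the
  parameters of the theorem, with c eliminated through 3u^2 + c^2 = 1; D plays the role of \<theta>.
\<close>

definition hypergeom_op :: "'a::field \<Rightarrow> ('a fps \<Rightarrow> 'a fps) \<Rightarrow> 'a fps \<Rightarrow> 'a fps \<Rightarrow> 'a fps" where
  "hypergeom_op U D Y A =
     D (D (D A)) + fps_const (3 * U) * D (D A) + fps_const (3 * U\<^sup>2 - 1/4) * D A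
     - Y * (D (D (D A)) + fps_const (3 * U + 1/2) * D (D A) + fps_const (3 * U\<^sup>2 + U - 1/36) * D A
            + fps_const ((U - 1/6) * (U + 1/6) * (U + 1/2)) * A)"

lemma hypergeom_op_diff:
  "hypergeom_op U (\<lambda>B. S * fps_theta B) Y (A - B)
   = hypergeom_op U (\<lambda>B. S * fps_theta B) Y A - hypergeom_op U (\<lambda>B. S * fps_theta B) Y B"
  by (simp add: hypergeom_op_def fps_theta_diff algebra_simps)

lemma hypergeom_op_compose_cubic_map:
  fixes A :: "'a::field_char_0 fps"
  shows "hypergeom_op U fps_theta fps_X A oo cubic_map
       = hypergeom_op U (\<lambda>B. cubic_scale * fps_theta B) cubic_map (A oo cubic_map)"
  by (simp add: hypergeom_op_def fps_compose_add_distrib fps_compose_sub_distrib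
      fps_compose_mult_distrib fps_theta_compose_cubic_map)

lemma fps_mult_nth_if_lower_zero:
  fixes H A :: "'a::comm_semiring_1 fps"
  assumes "\<forall>k<n. A $ k = 0"
  shows "\<forall>k<n. (H * A) $ k = 0" and "(H * A) $ n = H $ 0 * A $ n"
proof -
  show "\<forall>k<n. (H * A) $ k = 0"
    using assms by (auto simp: fps_mult_nth intro!: sum.neutral)
  have "(H * A) $ n = H $ 0 * A $ n + (\<Sum>i=Suc 0..n. H $ i * A $ (n - i))"
    by (simp add: fps_mult_nth sum.atLeast_Suc_atMost)
  also have "(\<Sum>i=Suc 0..n. H $ i * A $ (n - i)) = 0"
    using assms by (intro sum.neutral) auto
  finally show "(H * A) $ n = H $ 0 * A $ n" by simp
qed

lemma hypergeom_op_nth_if_lower_zero: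
  fixes S Y A :: "'a::field fps"
  assumes "S $ 0 = 1" "Y $ 0 = 0" and "\<forall>k<n. A $ k = 0"
  defines "D \<equiv> \<lambda>B. S * fps_theta B"
  shows "hypergeom_op U D Y A $ n = cubic_indicial U (of_nat n) * A $ n"
proof -
  have D: "\<forall>k<n. D B $ k = 0" "D B $ n = of_nat n * B $ n" if "\<forall>k<n. B $ k = 0" for B
    using fps_mult_nth_if_lower_zero[of n "fps_theta B" S] that assms(1) by (simp_all add: D_def)
  define R where "R = D (D (D A)) + fps_const (3 * U + 1/2) * D (D A) + fps_const (3 * U\<^sup>2 + U - 1/36) * D A
            + fps_const ((U - 1/6) * (U + 1/6) * (U + 1/2)) * A"
  have "\<forall>k<n. R $ k = 0" using D assms(3) by (simp add: R_def)
  hence "(Y * R) $ n = 0" using fps_mult_nth_if_lower_zero(2)[of n R Y] assms(2) by simp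
  thus ?thesis using D assms(3) unfolding hypergeom_op_def R_def[symmetric]
    by (simp add: cubic_indicial_def algebra_simps power2_eq_square power3_eq_cube)
qed

lemma hypergeom_op_unique_zero:
  fixes S Y R :: "'a::field fps"
  assumes "S $ 0 = 1" "Y $ 0 = 0"
      and indicial: "\<And>n. n \<ge> 1 \<Longrightarrow> cubic_indicial U (of_nat n) \<noteq> 0"
      and "hypergeom_op U (\<lambda>B. S * fps_theta B) Y R = 0" and "R $ 0 = 0"
  shows "R = 0"
proof -
  have "R $ n = 0" for n
  proof (induction n rule: less_induct)
    case (less n)
    show ?case
    proof (cases "n = 0")
      case False
      with less hypergeom_op_nth_if_lower_zero[OF assms(1,2), of n R U] assms(4) indicial[of n]
      show ?thesis by auto
    qed (use assms(5) in simp)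
  qed
  thus ?thesis by (simp add: fps_eq_iff)
qed

lemma fps_theta_cubic_nth:
  "(fps_theta (fps_theta (fps_theta F)) + fps_const a * fps_theta (fps_theta F) + fps_const b * fps_theta F) $ m
   = (of_nat m ^ 3 + a * of_nat m ^ 2 + b * of_nat m) * F $ m"
  by (simp add: algebra_simps power2_eq_square power3_eq_cube)

lemma hypergeom_op_theta_X_eq_0:
  fixes f :: "nat \<Rightarrow> 'a::field_char_0"
  assumes "\<And>n. f (Suc n) * cubic_indicial U (of_nat (Suc n)) = f n * cubic_numerator U (of_nat n)"
  shows "hypergeom_op U fps_theta fps_X (Abs_fps f) = 0"
proof (rule fps_ext)
  fix n
  show "hypergeom_op U fps_theta fps_X (Abs_fps f) $ n = 0 $ n"
  proof (cases n)
    case (Suc m)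
    have "hypergeom_op U fps_theta fps_X (Abs_fps f) $ n
        = f (Suc m) * cubic_indicial U (of_nat (Suc m)) - f m * cubic_numerator U (of_nat m)"
      unfolding hypergeom_op_def fps_sub_nth fps_theta_cubic_nth fps_X_mult_nth using Suc
      by (simp add: cubic_indicial_def cubic_numerator_def field_simps power2_eq_square power3_eq_cube; algebra)
    thus ?thesis using assms[of m] by simp
  qed (simp add: hypergeom_op_def)
qed

definition fls_cubic_theta :: "'a::field_char_0 fls \<Rightarrow> 'a fls" where
  "fls_cubic_theta f = (1 - 4 * fls_X) / (1 + 8 * fls_X) * fls_theta f"

lemma fps_to_fls_cubic_theta:
  "fps_to_fls (cubic_scale * fps_theta A) = fls_cubic_theta (fps_to_fls (A :: 'a::field_char_0 fps))"
  by (simp add: fls_cubic_theta_def fls_times_fps_to_fls fps_to_fls_cubic_scale fps_to_fls_fps_theta)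

lemmas fls_const_ring_hom =
  fls_plus_const[symmetric] fls_minus_const[symmetric] fls_const_mult_const[symmetric]
  fls_const_divide_const[symmetric] fls_const_power fls_const_numeral fls_const_uminus fls_const_1 fls_const_0

lemma fps_to_fls_hypergeom_op_cubic:
  fixes A :: "'a::field_char_0 fps" and U :: 'a
  defines "T \<equiv> fls_cubic_theta" and "u \<equiv> fls_const U" and "a \<equiv> fps_to_fls A"
  shows "fps_to_fls (hypergeom_op U (\<lambda>B. cubic_scale * fps_theta B) cubic_map A)
    = T (T (T a)) + 3 * u * T (T a) + (3 * u\<^sup>2 - 1/4) * T a
      - (- 27 * fls_X / (1 - 4 * fls_X) ^ 3) * (T (T (T a)) + (3 * u + 1/2) * T (T a)
         + (3 * u\<^sup>2 + u - 1/36) * T a + (u - 1/6) * (u + 1/6) * (u + 1/2) * a)"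
  unfolding hypergeom_op_def T_def u_def a_def
  by (simp only: fps_to_fls_minus fps_to_fls_plus fls_times_fps_to_fls fps_to_fls_fps_theta
      fps_to_fls_cubic_scale fls_cubic_theta_def fps_to_fls_cubic_map fps_const_to_fls fls_const_ring_hom)

lemma cubic_opcoeff_hom:
  fixes h :: "'a::field \<Rightarrow> 'b::field"
  assumes "\<And>a b. h (a + b) = h a + h b" "\<And>a b. h (a - b) = h a - h b" "\<And>a b. h (a * b) = h a * h b"
      and "\<And>a b. h (a / b) = h a / h b" "\<And>a n. h (a ^ n) = h a ^ n" "\<And>a. h (- a) = - h a"
      and "\<And>n. h (numeral n) = numeral n" "h 0 = 0" "h 1 = 1"
  shows "h (cubic_opcoeff U k j) = cubic_opcoeff (h U) k j"
proof (cases "k \<le> 3 \<and> j \<le> 3")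
  case True
  hence "k \<in> {..3}" "j \<in> {..3}" by auto
  thus ?thesis by (auto simp: cubic_opcoeff_def eval_nat_numeral atMost_Suc assms)
qed (auto simp: cubic_opcoeff_def assms)

definition recurrence_poly :: "'a::field \<Rightarrow> nat \<Rightarrow> 'a \<Rightarrow> 'a" where
  "recurrence_poly U k t = (\<Sum>j\<le>3. cubic_opcoeff U k j * t ^ j)"

lemma of_real_recurrence_poly:
  "of_real (recurrence_poly u k t) = recurrence_poly (of_real u :: 'a::real_field) k (of_real t)"
  by (simp add: recurrence_poly_def cubic_opcoeff_hom)

lemma fls_const_cubic_opcoeff: "fls_const (cubic_opcoeff U k j) = cubic_opcoeff (fls_const U :: 'a::field fls) k j"
  by (rule cubic_opcoeff_hom) (simp_all add: fls_const_ring_hom del: fls_const_mult_const)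

definition transformed_fps :: "'a::field \<Rightarrow> 'a fps \<Rightarrow> 'a fps" where
  "transformed_fps U G = (\<Sum>k\<le>3. fps_X ^ k *
     (fps_const (cubic_opcoeff U k 0) * G + fps_const (cubic_opcoeff U k 1) * fps_theta G
      + fps_const (cubic_opcoeff U k 2) * fps_theta (fps_theta G)
      + fps_const (cubic_opcoeff U k 3) * fps_theta (fps_theta (fps_theta G))))"

lemma transformed_fps_nth:
  "transformed_fps U G $ n = (\<Sum>k\<le>3. if k \<le> n then recurrence_poly U k (of_nat (n - k)) * G $ (n - k) else 0)"
  unfolding transformed_fps_def fps_sum_nth fps_X_power_mult_nth
  by (intro sum.cong) (auto simp: recurrence_poly_def atMost_nat_numeral algebra_simps power2_eq_square power3_eq_cube)

lemma fps_to_fls_sum: "fps_to_fls (sum f A) = (\<Sum>k\<in>A. fps_to_fls (f k))"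
  by (induction A rule: infinite_finite_induct) simp_all

text \<open>
  The computation is carried out for Laurent series, where 1 - 4x and 1 + 8x are invertible and the
  Euler operator is a derivation.
\<close>

lemma hypergeom_op_times_transformed:
  fixes U :: "'a::field_char_0" and E G :: "'a fps"
  assumes "fps_theta E * (1 - 4 * fps_X) = fps_const (- 4 * (3 * U - 1/2)) * fps_X * E"
  shows "hypergeom_op U (\<lambda>B. cubic_scale * fps_theta B) cubic_map (E * G) * (1 + 8 * fps_X) ^ 3
       = E * transformed_fps U G"
proof -
  have "fls_theta (fps_to_fls E) * (1 - 4 * fls_X) = - 4 * (3 * fls_const U - 1/2) * fls_X * fps_to_fls E"
    using arg_cong[OF assms, of fps_to_fls]
    by (simp only: fls_times_fps_to_fls fps_to_fls_fps_theta fps_to_fls_minus fps_const_to_fls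
        fps_X_to_fls fls_const_ring_hom) simp
  from fls_theta.transformed_operator[of fls_X "fls_const U" "fps_to_fls E" "fps_to_fls G"
      "fps_to_fls (fps_theta G)" "fps_to_fls (fps_theta (fps_theta G))"
      "fps_to_fls (fps_theta (fps_theta (fps_theta G)))" fls_cubic_theta,
      OF fls_theta_fls_X fls_theta_fls_const this fps_to_fls_fps_theta[symmetric]
      fps_to_fls_fps_theta[symmetric] fps_to_fls_fps_theta[symmetric]
      fls_cubic_denominators_neq_0 fls_cubic_theta_def]
  have "fps_to_fls (hypergeom_op U (\<lambda>B. cubic_scale * fps_theta B) cubic_map (E * G) * (1 + 8 * fps_X) ^ 3)
      = fps_to_fls (E * transformed_fps U G)"
    unfolding fls_times_fps_to_fls fps_to_fls_hypergeom_op_cubic fps_to_fls_power transformed_fps_def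
      fps_to_fls_sum
    by (simp add: fps_to_fls_fps_theta fls_const_cubic_opcoeff fls_times_fps_to_fls fps_to_fls_power)
  thus ?thesis by simp
qed

text \<open>In the theorem u = sin \<theta> / \<surd>3 and c = cos \<theta>.\<close>

locale cubic_transformation =
  fixes u c :: real
  assumes sum_squares: "3 * u\<^sup>2 + c\<^sup>2 = 1"
      and b1: "\<not> nonpos_int (1 + 3 * u / 2 + c / 2)"
      and b2: "\<not> nonpos_int (1 + 3 * u / 2 - c / 2)"
      and b3: "\<not> nonpos_int (u - 1/2)"
begin

definition F_coeff :: "nat \<Rightarrow> real" where
  "F_coeff = hypergeom_coeff [u - 1/6, u + 1/6, u + 1/2] [1 + 3 * u / 2 + c / 2, 1 + 3 * u / 2 - c / 2]"

definition G_coeff :: "nat \<Rightarrow> real" where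
  "G_coeff = hypergeom_coeff [3 * u - 1/2, - 1/2 - c, - 1/2 + c, 3/2 + u]
                             [1 + 3 * u / 2 + c / 2, 1 + 3 * u / 2 - c / 2, u - 1/2]"

definition H_coeff :: "nat \<Rightarrow> real" where
  "H_coeff = hypergeom_coeff [3 * u - 1/2, - 1/2 - c, - 1/2 + c] [1 + 3 * u / 2 + c / 2, 1 + 3 * u / 2 - c / 2]"

definition H_numerator :: "real \<Rightarrow> real" where
  "H_numerator t = (3 * u - 1/2 + t) * ((t - 1/2)\<^sup>2 + 3 * u\<^sup>2 - 1)"

lemma lower_params_prod:
  "prod_list (map (\<lambda>b. b + t) [1, 1 + 3 * u / 2 + c / 2, 1 + 3 * u / 2 - c / 2]) = cubic_indicial u (t + 1)"
proof -
  have "(1 + 3 * u / 2 + c / 2 + t) * (1 + 3 * u / 2 - c / 2 + t)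
      = (t + 1)\<^sup>2 + 3 * u * (t + 1) + 9 * u\<^sup>2 / 4 - c\<^sup>2 / 4"
    by (simp add: algebra_simps power2_eq_square)
  also have "\<dots> = (t + 1)\<^sup>2 + 3 * u * (t + 1) + 3 * u\<^sup>2 - 1/4"
    using sum_squares by (simp add: field_simps)
  finally have "prod_list (map (\<lambda>b. b + t) [1, 1 + 3 * u / 2 + c / 2, 1 + 3 * u / 2 - c / 2])
      = (1 + t) * ((t + 1)\<^sup>2 + 3 * u * (t + 1) + 3 * u\<^sup>2 - 1/4)" by simp
  also have "\<dots> = cubic_indicial u (t + 1)" unfolding cubic_indicial_def by algebra
  finally show ?thesis .
qed

lemma F_coeff_Suc: "F_coeff (Suc n) * cubic_indicial u (real n + 1) = F_coeff n * cubic_numerator u (real n)"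
proof -
  have "F_coeff (Suc n) * prod_list (map (\<lambda>b. b + real n) [1, 1 + 3 * u / 2 + c / 2, 1 + 3 * u / 2 - c / 2])
      = F_coeff n * prod_list (map (\<lambda>a. a + real n) [u - 1/6, u + 1/6, u + 1/2])"
    unfolding F_coeff_def by (rule hypergeom_coeff_Suc) (simp add: b1 b2)
  moreover have "prod_list (map (\<lambda>a. a + real n) [u - 1/6, u + 1/6, u + 1/2]) = cubic_numerator u (real n)"
    by (simp add: cubic_numerator_def mult.assoc)
  ultimately show ?thesis unfolding lower_params_prod by simp
qed

lemma H_coeff_Suc: "H_coeff (Suc n) * cubic_indicial u (real n + 1) = H_coeff n * H_numerator (real n)"
proof -
  have "H_coeff (Suc n) * prod_list (map (\<lambda>b. b + real n) [1, 1 + 3 * u / 2 + c / 2, 1 + 3 * u / 2 - c / 2])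
      = H_coeff n * prod_list (map (\<lambda>a. a + real n) [3 * u - 1/2, - 1/2 - c, - 1/2 + c])"
    unfolding H_coeff_def by (rule hypergeom_coeff_Suc) (simp add: b1 b2)
  moreover have "(- 1/2 - c + real n) * (- 1/2 + c + real n) = (real n - 1/2)\<^sup>2 - c\<^sup>2"
    by (simp add: algebra_simps power2_eq_square)
  hence "(- 1/2 - c + real n) * (- 1/2 + c + real n) = (real n - 1/2)\<^sup>2 + 3 * u\<^sup>2 - 1"
    using sum_squares by linarith
  hence "prod_list (map (\<lambda>a. a + real n) [3 * u - 1/2, - 1/2 - c, - 1/2 + c]) = H_numerator (real n)"
    by (simp add: H_numerator_def)
  ultimately show ?thesis unfolding lower_params_prod by simp
qed

lemma pochhammer_shift_ratio:
  "pochhammer (3/2 + u) n * ((u - 1/2) * (u + 1/2))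
   = pochhammer (u - 1/2) n * ((real n + u - 1/2) * (real n + u + 1/2))"
proof (induction n)
  case (Suc n)
  have "pochhammer (3/2 + u) (Suc n) * ((u - 1/2) * (u + 1/2))
      = pochhammer (3/2 + u) n * ((u - 1/2) * (u + 1/2)) * (3/2 + u + real n)"
    by (simp add: pochhammer_Suc)
  also have "\<dots> = pochhammer (u - 1/2) n * ((real n + u - 1/2) * (real n + u + 1/2)) * (3/2 + u + real n)"
    by (simp only: Suc)
  also have "\<dots> = pochhammer (u - 1/2) (Suc n) * ((real (Suc n) + u - 1/2) * (real (Suc n) + u + 1/2))"
    by (simp add: pochhammer_Suc field_simps)
  finally show ?case .
qed simp

lemma G_coeff_eq_H_coeff:
  "G_coeff n * ((u - 1/2) * (u + 1/2)) = H_coeff n * ((real n + u - 1/2) * (real n + u + 1/2))"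
proof -
  have p: "pochhammer (u - 1/2) n \<noteq> 0" by (rule pochhammer_neq_0_if_not_nonpos_int[OF b3])
  hence "G_coeff n * pochhammer (u - 1/2) n = H_coeff n * pochhammer (3/2 + u) n"
    by (simp add: G_coeff_def H_coeff_def hypergeom_coeff_def field_simps)
  hence "G_coeff n * pochhammer (u - 1/2) n * ((u - 1/2) * (u + 1/2))
      = H_coeff n * (pochhammer (3/2 + u) n * ((u - 1/2) * (u + 1/2)))"
    by (simp only: mult.assoc)
  also have "\<dots> = H_coeff n * (pochhammer (u - 1/2) n * ((real n + u - 1/2) * (real n + u + 1/2)))"
    by (simp only: pochhammer_shift_ratio)
  finally have "pochhammer (u - 1/2) n * (G_coeff n * ((u - 1/2) * (u + 1/2)))
      = pochhammer (u - 1/2) n * (H_coeff n * ((real n + u - 1/2) * (real n + u + 1/2)))"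
    by (simp only: ac_simps)
  thus ?thesis using p by simp
qed

text \<open>
  Extension by zero to negative indices: as cubic_indicial u 0 = 0, the recurrence of H then holds
  at every integer, and the first three coefficients of the four-term recurrence need no separate
  treatment.
\<close>

definition H_ext :: "int \<Rightarrow> real" where
  "H_ext i = (if i < 0 then 0 else H_coeff (nat i))"

definition G_ext :: "int \<Rightarrow> real" where
  "G_ext i = (if i < 0 then 0 else G_coeff (nat i))"

lemma H_ext_rec: "H_ext (i + 1) * cubic_indicial u (of_int i + 1) = H_ext i * H_numerator (of_int i)"
proof (cases "i \<ge> 0")
  case True
  then obtain n where "i = int n" by (metis nonneg_int_cases)
  thus ?thesis using H_coeff_Suc[of n] by (simp add: H_ext_def nat_add_distrib)
next
  case False
  thus ?thesis by (cases "i = -1") (simp_all add: H_ext_def cubic_indicial_def)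
qed

lemma G_ext_eq_H_ext:
  "G_ext i * ((u - 1/2) * (u + 1/2)) = H_ext i * ((of_int i + u - 1/2) * (of_int i + u + 1/2))"
  using G_coeff_eq_H_coeff[of "nat i"] by (simp add: G_ext_def H_ext_def)

text \<open>
  The right-hand side expresses the four-term recurrence for G (multiplied by u^2 - 1/4) as a
  combination of three consecutive instances of the two-term recurrence for H.
\<close>

lemma recurrence_certificate:
  fixes t h0 h1 h2 h3 :: real
  defines "\<kappa> \<equiv> \<lambda>s. (s + u - 1/2) * (s + u + 1/2)"
  shows "recurrence_poly u 0 t * (h3 * \<kappa> t) + recurrence_poly u 1 (t - 1) * (h2 * \<kappa> (t - 1))
       + recurrence_poly u 2 (t - 2) * (h1 * \<kappa> (t - 2)) + recurrence_poly u 3 (t - 3) * (h0 * \<kappa> (t - 3))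
    = \<kappa> t * (h3 * cubic_indicial u t - h2 * H_numerator (t - 1))
      + 16 * (t + u - 1/2) * (t + u - 5/2) * (h2 * cubic_indicial u (t - 1) - h1 * H_numerator (t - 2))
      + 64 * (t + u - 5/2) * (t + u - 7/2) * (h1 * cubic_indicial u (t - 2) - h0 * H_numerator (t - 3))"
  unfolding \<kappa>_def recurrence_poly_def cubic_indicial_def H_numerator_def
  by (simp add: cubic_opcoeff_def atMost_nat_numeral) algebra

lemma G_ext_recurrence: "(\<Sum>k\<le>3. recurrence_poly u k (of_int i - of_nat k) * G_ext (i - int k)) = 0"
proof -
  define K where "K = (u - 1/2) * (u + 1/2)"
  have "u - 1/2 \<noteq> - real 0" "u - 1/2 \<noteq> - real 1" using b3 unfolding nonpos_int_def by blast+
  hence "K \<noteq> 0" by (auto simp: K_def)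
  have GH: "G_ext j * K = H_ext j * ((of_int j + u - 1/2) * (of_int j + u + 1/2))" for j
    unfolding K_def by (rule G_ext_eq_H_ext)
  have rec1: "H_ext i * cubic_indicial u (of_int i) = H_ext (i - 1) * H_numerator (of_int i - 1)"
    using H_ext_rec[of "i - 1"] by simp
  have rec2: "H_ext (i - 1) * cubic_indicial u (of_int i - 1) = H_ext (i - 2) * H_numerator (of_int i - 2)"
    using H_ext_rec[of "i - 2"] by simp
  have rec3: "H_ext (i - 2) * cubic_indicial u (of_int i - 2) = H_ext (i - 3) * H_numerator (of_int i - 3)"
    using H_ext_rec[of "i - 3"] by simp
  have "(\<Sum>k\<le>3. recurrence_poly u k (of_int i - of_nat k) * G_ext (i - int k)) * K
      = recurrence_poly u 0 (of_int i) * (H_ext i * ((of_int i + u - 1/2) * (of_int i + u + 1/2)))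
        + recurrence_poly u 1 (of_int i - 1) * (H_ext (i - 1) * ((of_int i - 1 + u - 1/2) * (of_int i - 1 + u + 1/2)))
        + recurrence_poly u 2 (of_int i - 2) * (H_ext (i - 2) * ((of_int i - 2 + u - 1/2) * (of_int i - 2 + u + 1/2)))
        + recurrence_poly u 3 (of_int i - 3) * (H_ext (i - 3) * ((of_int i - 3 + u - 1/2) * (of_int i - 3 + u + 1/2)))"
    unfolding sum_distrib_right mult.assoc GH by (simp add: atMost_nat_numeral)
  also have "\<dots> = 0"
    using recurrence_certificate[of "of_int i" "H_ext i" "H_ext (i - 1)" "H_ext (i - 2)" "H_ext (i - 3)"]
    unfolding rec1 rec2 rec3 by simp
  finally show ?thesis using \<open>K \<noteq> 0\<close> by simp
qed

definition F_fps :: "complex fps" where "F_fps = Abs_fps (\<lambda>n. of_real (F_coeff n))"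
definition G_fps :: "complex fps" where "G_fps = Abs_fps (\<lambda>n. of_real (G_coeff n))"
definition E_fps :: "complex fps" where
  "E_fps = Abs_fps (\<lambda>n. of_real (gen_binomial_coeff (3 * u - 1/2) (- 4) n))"

lemma F_fps_hypergeom_op: "hypergeom_op (of_real u) fps_theta fps_X F_fps = 0"
  unfolding F_fps_def
proof (rule hypergeom_op_theta_X_eq_0)
  fix n
  show "of_real (F_coeff (Suc n)) * cubic_indicial (of_real u) (of_nat (Suc n))
      = (of_real (F_coeff n) * cubic_numerator (of_real u) (of_nat n) :: complex)"
    using arg_cong[OF F_coeff_Suc[of n], of "of_real :: real \<Rightarrow> complex"]
    by (simp add: cubic_indicial_def cubic_numerator_def add_ac)
qed

lemma G_fps_transformed: "transformed_fps (of_real u) G_fps = 0"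
proof (rule fps_ext)
  fix n
  have "(if k \<le> n then recurrence_poly (of_real u) k (of_nat (n - k)) * G_fps $ (n - k) else 0)
      = of_real (recurrence_poly u k (of_int (int n) - of_nat k) * G_ext (int n - int k))" for k
    by (auto simp: G_fps_def G_ext_def of_real_recurrence_poly of_nat_diff nat_diff_distrib)
  hence "transformed_fps (of_real u) G_fps $ n
      = of_real (\<Sum>k\<le>3. recurrence_poly u k (of_int (int n) - of_nat k) * G_ext (int n - int k))"
    unfolding transformed_fps_nth of_real_sum by simp
  thus "transformed_fps (of_real u) G_fps $ n = 0 $ n" unfolding G_ext_recurrence[of "int n"] by simp
qed

lemma E_fps_theta: "fps_theta E_fps * (1 - 4 * fps_X) = fps_const (- 4 * (3 * of_real u - 1/2)) * fps_X * E_fps"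
proof -
  have "fps_const (of_real (- 4)) = (- 4 :: complex fps)" by (simp add: fps_numeral_fps_const)
  from gen_binomial_fps_theta[of "3 * u - 1/2" "- 4", unfolded this] show ?thesis by (simp add: E_fps_def)
qed

lemma EG_fps_hypergeom_op: "hypergeom_op (of_real u) (\<lambda>B. cubic_scale * fps_theta B) cubic_map (E_fps * G_fps) = 0"
proof -
  have "(1 + 8 * fps_X :: complex fps) $ 0 \<noteq> 0" by simp
  hence "(1 + 8 * fps_X :: complex fps) ^ 3 \<noteq> 0" by (auto simp: power_eq_0_iff)
  thus ?thesis
    using hypergeom_op_times_transformed[OF E_fps_theta, of G_fps] by (simp add: G_fps_transformed)
qed

lemma cubic_indicial_neq_0: "n \<ge> 1 \<Longrightarrow> cubic_indicial (of_real u :: complex) (of_nat n) \<noteq> 0"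
proof -
  assume "n \<ge> 1"
  then obtain m where m: "n = Suc m" by (cases n) auto
  have "prod_list (map (\<lambda>b. b + real m) [1, 1 + 3 * u / 2 + c / 2, 1 + 3 * u / 2 - c / 2]) \<noteq> 0"
    using b1 b2 add_of_nat_neq_0_if_not_nonpos_int by (auto simp: prod_list_zero_iff)
  hence "cubic_indicial u (real m + 1) \<noteq> 0" unfolding lower_params_prod .
  moreover have "cubic_indicial (of_real u :: complex) (of_nat n) = of_real (cubic_indicial u (real m + 1))"
    using m by (simp add: cubic_indicial_def add_ac)
  ultimately show ?thesis by simp
qed

lemma F_fps_compose_cubic_map: "F_fps oo cubic_map = E_fps * G_fps"
proof -
  define R where "R = (F_fps oo cubic_map) - E_fps * G_fps"
  have "hypergeom_op (of_real u) (\<lambda>B. cubic_scale * fps_theta B) cubic_map (F_fps oo cubic_map) = 0"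
    using hypergeom_op_compose_cubic_map[of "of_real u" F_fps] by (simp add: F_fps_hypergeom_op)
  moreover have "hypergeom_op (of_real u) (\<lambda>B. cubic_scale * fps_theta B) cubic_map R
      = hypergeom_op (of_real u) (\<lambda>B. cubic_scale * fps_theta B) cubic_map (F_fps oo cubic_map)
        - hypergeom_op (of_real u) (\<lambda>B. cubic_scale * fps_theta B) cubic_map (E_fps * G_fps)"
    unfolding R_def by (simp only: hypergeom_op_diff)
  ultimately have op: "hypergeom_op (of_real u) (\<lambda>B. cubic_scale * fps_theta B) cubic_map R = 0"
    by (simp add: EG_fps_hypergeom_op)
  have R0: "R $ 0 = 0"
    by (simp add: R_def F_fps_def E_fps_def G_fps_def F_coeff_def G_coeff_def gen_binomial_coeff_def)
  have "R = 0"
    using cubic_indicial_neq_0 op R0 by (rule hypergeom_op_unique_zero[OF cubic_scale_nth_0 cubic_map_nth_0])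
  thus ?thesis by (simp add: R_def)
qed

lemma F_fps_conv_radius_pos: "fps_conv_radius F_fps > 0"
  unfolding F_fps_def F_coeff_def using b1 b2 by (intro fps_conv_radius_hypergeom_pos) auto

lemma G_fps_conv_radius_pos: "fps_conv_radius G_fps > 0"
  unfolding G_fps_def G_coeff_def using b1 b2 b3 by (intro fps_conv_radius_hypergeom_pos) auto

lemma E_fps_conv_radius_pos: "fps_conv_radius E_fps > 0"
  unfolding E_fps_def by (rule gen_binomial_conv_radius_pos)

lemma eval_F_fps:
  "ereal \<bar>t\<bar> < fps_conv_radius F_fps \<Longrightarrow> eval_fps F_fps (of_real t)
    = of_real (hypergeom [u - 1/6, u + 1/6, u + 1/2] [1 + 3 * u / 2 + c / 2, 1 + 3 * u / 2 - c / 2] t)"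
  using eval_fps_of_real[of t F_coeff] by (simp add: hypergeom_eq_suminf F_fps_def F_coeff_def)

lemma eval_G_fps:
  "ereal \<bar>t\<bar> < fps_conv_radius G_fps \<Longrightarrow> eval_fps G_fps (of_real t)
    = of_real (hypergeom [3 * u - 1/2, - 1/2 - c, - 1/2 + c, 3/2 + u]
                         [1 + 3 * u / 2 + c / 2, 1 + 3 * u / 2 - c / 2, u - 1/2] t)"
  using eval_fps_of_real[of t G_coeff] by (simp add: hypergeom_eq_suminf G_fps_def G_coeff_def)

lemma eval_E_fps:
  assumes "ereal \<bar>t\<bar> < fps_conv_radius E_fps" and "\<bar>t\<bar> < 1/4"
  shows "eval_fps E_fps (of_real t) = of_real ((1 - 4 * t) powr (3 * u - 1/2))"
proof -
  have "\<bar>- 4 * t\<bar> < 1" using assms(2) by simp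
  thus ?thesis
    using sums_unique[OF gen_binomial_sums[of "- 4" t "3 * u - 1/2"]]
      eval_fps_of_real[of t "gen_binomial_coeff (3 * u - 1/2) (- 4)"] assms(1)
    by (simp add: E_fps_def)
qed

lemma eventually_eval_F_fps_cubic:
  "eventually (\<lambda>y::complex. eval_fps F_fps (- 27 * y * inverse ((1 - 4 * y) ^ 3)) = eval_fps (E_fps * G_fps) y)
     (nhds 0)"
proof -
  have "(\<lambda>y::complex. - 27 * y * inverse ((1 - 4 * y) ^ 3)) has_fps_expansion cubic_map"
    unfolding cubic_map_def by (intro fps_expansion_intros) (simp add: fps_nth_power_0)
  from has_fps_expansion_compose[OF eval_fps_has_fps_expansion[OF F_fps_conv_radius_pos] this cubic_map_nth_0]
  show ?thesis unfolding F_fps_compose_cubic_map has_fps_expansion_def by (simp add: eq_commute)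
qed

theorem hypergeom_cubic_transformation:
  "\<exists>\<epsilon>>0. \<forall>x::real. \<bar>x\<bar> < \<epsilon> \<longrightarrow>
     hypergeom [u - 1/6, u + 1/6, u + 1/2] [1 + 3 * u / 2 + c / 2, 1 + 3 * u / 2 - c / 2] (- 27 * x / (1 - 4 * x) ^ 3)
     = (1 - 4 * x) powr (3 * u - 1/2) *
       hypergeom [3 * u - 1/2, - 1/2 - c, - 1/2 + c, 3/2 + u] [1 + 3 * u / 2 + c / 2, 1 + 3 * u / 2 - c / 2, u - 1/2] x"
proof -
  obtain d where "d > 0" and d: "\<And>y. dist y 0 < d
      \<Longrightarrow> eval_fps F_fps (- 27 * y * inverse ((1 - 4 * y) ^ 3)) = eval_fps (E_fps * G_fps) y"
    using eventually_eval_F_fps_cubic unfolding eventually_nhds_metric by blast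
  obtain rF where rF: "0 < ereal rF" "ereal rF < fps_conv_radius F_fps"
    using ereal_dense2[OF F_fps_conv_radius_pos] by blast
  obtain rG where rG: "0 < ereal rG" "ereal rG < fps_conv_radius G_fps"
    using ereal_dense2[OF G_fps_conv_radius_pos] by blast
  obtain rE where rE: "0 < ereal rE" "ereal rE < fps_conv_radius E_fps"
    using ereal_dense2[OF E_fps_conv_radius_pos] by blast
  define \<epsilon> where "\<epsilon> = min d (min (1/8) (min (rF / 216) (min rG rE)))"
  have "\<epsilon> > 0" using \<open>d > 0\<close> rF rG rE by (simp add: \<epsilon>_def)
  moreover have "hypergeom [u - 1/6, u + 1/6, u + 1/2] [1 + 3 * u / 2 + c / 2, 1 + 3 * u / 2 - c / 2] (- 27 * x / (1 - 4 * x) ^ 3)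
     = (1 - 4 * x) powr (3 * u - 1/2) *
       hypergeom [3 * u - 1/2, - 1/2 - c, - 1/2 + c, 3/2 + u] [1 + 3 * u / 2 + c / 2, 1 + 3 * u / 2 - c / 2, u - 1/2] x"
    if "\<bar>x\<bar> < \<epsilon>" for x :: real
  proof -
    define y where "y = - 27 * x / (1 - 4 * x) ^ 3"
    have x: "\<bar>x\<bar> < d" "\<bar>x\<bar> < 1/8" "216 * \<bar>x\<bar> < rF" "\<bar>x\<bar> < rG" "\<bar>x\<bar> < rE"
      using that by (auto simp: \<epsilon>_def)
    have xG: "ereal \<bar>x\<bar> < fps_conv_radius G_fps" by (rule less_trans[OF _ rG(2)]) (simp add: x(4))
    have xE: "ereal \<bar>x\<bar> < fps_conv_radius E_fps" by (rule less_trans[OF _ rE(2)]) (simp add: x(5))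
    have "\<bar>y\<bar> < rF" using abs_cubic_map_le[OF x(2)] x(3) unfolding y_def by linarith
    hence "ereal \<bar>y\<bar> < ereal rF" by simp
    hence yF: "ereal \<bar>y\<bar> < fps_conv_radius F_fps" using rF(2) by (rule less_trans)
    have "complex_of_real y = - 27 * of_real x * inverse ((1 - 4 * of_real x) ^ 3)"
      by (simp add: y_def divide_inverse)
    hence "eval_fps F_fps (of_real y) = eval_fps E_fps (of_real x) * eval_fps G_fps (of_real x)"
      using d[of "of_real x"] x(1) xG xE by (simp add: eval_fps_mult dist_norm)
    moreover have "\<bar>x\<bar> < 1/4" using x(2) by simp
    ultimately have "complex_of_real (hypergeom [u - 1/6, u + 1/6, u + 1/2] [1 + 3 * u / 2 + c / 2, 1 + 3 * u / 2 - c / 2] y)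
      = of_real ((1 - 4 * x) powr (3 * u - 1/2)) * of_real (hypergeom [3 * u - 1/2, - 1/2 - c, - 1/2 + c, 3/2 + u]
          [1 + 3 * u / 2 + c / 2, 1 + 3 * u / 2 - c / 2, u - 1/2] x)"
      by (simp only: eval_F_fps[OF yF] eval_G_fps[OF xG] eval_E_fps[OF xE])
    thus ?thesis unfolding y_def of_real_mult[symmetric] of_real_eq_iff .
  qed
  ultimately show ?thesis by blast
qed

end

theorem mainTheorem13:
  fixes \<theta> :: real
  assumes "\<not> nonpos_int (1 + sin (\<theta> + pi/6))"
      and "\<not> nonpos_int (1 + sin (\<theta> - pi/6))"
      and "\<not> nonpos_int (-1/2 + sqrt 3 / 3 * sin \<theta>)"
  shows "\<exists>\<epsilon>>0. \<forall>x::real. \<bar>x\<bar> < \<epsilon> \<longrightarrow>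
    hypergeom [-1/6 + sqrt 3 / 3 * sin \<theta>, 1/6 + sqrt 3 / 3 * sin \<theta>, 1/2 + sqrt 3 / 3 * sin \<theta>]
              [1 + sin (\<theta> + pi/6), 1 + sin (\<theta> - pi/6)]
              (- 27 * x / (1 - 4 * x) ^ 3)
    = (1 - 4 * x) powr (-1/2 + sqrt 3 * sin \<theta>) *
      hypergeom [-1/2 + sqrt 3 * sin \<theta>, -1/2 - cos \<theta>, -1/2 + cos \<theta>, 3/2 + sqrt 3 / 3 * sin \<theta>]
                [1 + sin (\<theta> + pi/6), 1 + sin (\<theta> - pi/6), -1/2 + sqrt 3 / 3 * sin \<theta>]
                x"
proof -
  define u where "u = sqrt 3 / 3 * sin \<theta>"
  have sin_plus: "1 + sin (\<theta> + pi/6) = 1 + 3 * u / 2 + cos \<theta> / 2"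
    by (simp add: u_def sin_add cos_30 sin_30 algebra_simps)
  have sin_minus: "1 + sin (\<theta> - pi/6) = 1 + 3 * u / 2 - cos \<theta> / 2"
    by (simp add: u_def sin_diff cos_30 sin_30 algebra_simps)
  have "3 * u\<^sup>2 + (cos \<theta>)\<^sup>2 = 1"
    by (simp add: u_def power_mult_distrib power_divide)
  then interpret cubic_transformation u "cos \<theta>"
    using assms by unfold_locales (simp_all add: sin_plus sin_minus u_def)
  have "sqrt 3 * sin \<theta> = 3 * u" by (simp add: u_def)
  thus ?thesis
    using hypergeom_cubic_transformation by (simp add: sin_plus sin_minus u_def algebra_simps)
qed

end
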